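(* Let $\Omega\subset\mathbb{R}^d$ be a bounded domain, $B_1,\dots,B_m\subset\Omega$ open nonempty sets, $K_i\supset B_i$ convex sets with Lipschitz boundary with $\Omega\subset\bigcup_i\overline{K_i}$, $M=\max_{x\in\Omega}|\{i:x\in K_i\}|$ and $r=\max_i\operatorname{diam}(B_i)$. Let $u\in C^{0,\lambda}(\overline\Omega)$ for some $\lambda\in(0,1]$, let $p_i\in B_i$ and $b_i=u(p_i)$ for $i=1,\dots,m$, and define $b(u,v)=\sum_i|B_i|\mathrm{avg}_{B_i}(u)\mathrm{avg}_{B_i}(v)$ and $\widetilde{b(u,v)}=\sum_ib_i|B_i|\mathrm{avg}_{B_i}(v)$. Then $$\mathbb{E}_{\mathrm{data}}=\sup_{0\ne v\in L^2(\Omega)}\frac{|\widetilde{b(u,v)}-b(u,v)|}{\|v\|_{L^2(\Omega)}}\le\|u\|_{C^{0,\lambda}(\overline\Omega)}\,M\,|\Omega|^{1/2}\,r^\lambda.$$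
   Context: $\mathrm{avg}_U(v)=|U|^{-1}\int_Uv\,dx$. $C^{0,\lambda}(\overline\Omega)$ is the space of $\lambda$-Hölder continuous functions (Lipschitz for $\lambda=1$) with its usual norm, which bounds the Hölder seminorm $\sup_{x\ne y}|u(x)-u(y)|/|x-y|^\lambda$. *)

theory Defs
  imports "HOL-Analysis.Analysis"
begin

definition avg :: "'a::euclidean_space set \<Rightarrow> ('a \<Rightarrow> real) \<Rightarrow> real" where
  "avg U v = (1 / measure lebesgue U) * (LINT x:U|lebesgue. v x)"

definition holder_on :: "real \<Rightarrow> 'a::metric_space set \<Rightarrow> ('a \<Rightarrow> real) \<Rightarrow> bool" where
  "holder_on lam S u \<longleftrightarrow> (\<exists>C. \<forall>x\<in>S. \<forall>y\<in>S. \<bar>u x - u y\<bar> \<le> C * dist x y powr lam)"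

definition holder_seminorm :: "real \<Rightarrow> 'a::metric_space set \<Rightarrow> ('a \<Rightarrow> real) \<Rightarrow> real" where
  "holder_seminorm lam S u =
     (SUP xy \<in> {(x,y). x \<in> S \<and> y \<in> S \<and> x \<noteq> y}. \<bar>u (fst xy) - u (snd xy)\<bar> / dist (fst xy) (snd xy) powr lam)"

definition holder_norm :: "real \<Rightarrow> 'a::metric_space set \<Rightarrow> ('a \<Rightarrow> real) \<Rightarrow> real" where
  "holder_norm lam S u = (SUP x \<in> S. \<bar>u x\<bar>) + holder_seminorm lam S u"

text \<open>Lipschitz boundary: near every boundary point, after choosing a unit direction e,
  the interior of K is the strict subgraph (in direction e) of a Lipschitz function
  defined on the hyperplane orthogonal to e.\<close>
definition lipschitz_boundary :: "'a::euclidean_space set \<Rightarrow> bool" where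
  "lipschitz_boundary K \<longleftrightarrow>
     (\<forall>x \<in> frontier K. \<exists>e \<rho> g L. norm e = 1 \<and> \<rho> > 0 \<and>
        L-lipschitz_on {z. z \<bullet> e = 0} g \<and>
        interior K \<inter> ball x \<rho> = {y \<in> ball x \<rho>. y \<bullet> e < g (y - (y \<bullet> e) *\<^sub>R e)})"

definition L2_on :: "'a::euclidean_space set \<Rightarrow> ('a \<Rightarrow> real) \<Rightarrow> bool" where
  "L2_on \<Omega> v \<longleftrightarrow> set_borel_measurable lebesgue \<Omega> v \<and> set_integrable lebesgue \<Omega> (\<lambda>x. (v x)\<^sup>2)"

definition L2_norm :: "'a::euclidean_space set \<Rightarrow> ('a \<Rightarrow> real) \<Rightarrow> real" where
  "L2_norm \<Omega> v = sqrt (LINT x:\<Omega>|lebesgue. (v x)\<^sup>2)"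

end

theory Submission
  imports Defs
begin

text \<open>
  The \<open>i\<close>-th error term is \<open>(u(p_i) |B_i| - \<integral>_{B_i} u) avg_{B_i}(v)\<close>. By Hoelder
  continuity \<open>|u(p_i) - u| \<le> [u]_\<lambda> r^\<lambda>\<close> on \<open>B_i\<close>, so the term is at most
  \<open>[u]_\<lambda> r^\<lambda> \<integral>_{B_i} |v|\<close>. As \<open>B_i \<subseteq> K_i\<close>, no point of \<open>\<Omega>\<close> lies in more than \<open>M\<close>
  of the \<open>B_i\<close>, so the sum is at most \<open>[u]_\<lambda> r^\<lambda> M \<integral>_\<Omega> |v|\<close>, and Cauchy-Schwarz
  bounds \<open>\<integral>_\<Omega> |v|\<close> by \<open>|\<Omega>|^(1/2) \<parallel>v\<parallel>_2\<close>.
\<close>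

lemma abs_le_square_plus_one: "\<bar>t\<bar> \<le> t\<^sup>2 + (1::real)"
  using zero_le_power2[of "\<bar>t\<bar> - 1"] by (simp add: power2_diff)

lemma holder_on_imp_continuous_on:
  fixes u :: "'a::metric_space \<Rightarrow> real"
  assumes "holder_on lam S u" "0 < lam"
  shows "continuous_on S u"
  unfolding continuous_on_def
proof
  fix x assume x: "x \<in> S"
  obtain C where C: "\<forall>x\<in>S. \<forall>y\<in>S. \<bar>u x - u y\<bar> \<le> C * dist x y powr lam"
    using assms(1) unfolding holder_on_def by blast
  have "((\<lambda>y. C * dist y x powr lam) \<longlongrightarrow> 0) (at x within S)"
    by (intro tendsto_mult_right_zero tendsto_zero_powrI) (auto intro!: tendsto_eq_intros assms(2))
  moreover have "\<forall>\<^sub>F y in at x within S. norm (u y - u x) \<le> C * dist y x powr lam"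
    using C x by (auto simp: eventually_at_filter)
  ultimately have "((\<lambda>y. u y - u x) \<longlongrightarrow> 0) (at x within S)"
    by (rule Lim_null_comparison[rotated])
  then show "(u \<longlongrightarrow> u x) (at x within S)"
    by (simp add: LIM_zero_iff)
qed

lemma holder_quotient_le_holder_seminorm:
  assumes "holder_on lam S u" "x \<in> S" "y \<in> S" "x \<noteq> y"
  shows "\<bar>u x - u y\<bar> / dist x y powr lam \<le> holder_seminorm lam S u"
proof -
  obtain C where C: "\<forall>x\<in>S. \<forall>y\<in>S. \<bar>u x - u y\<bar> \<le> C * dist x y powr lam"
    using assms(1) unfolding holder_on_def by blast
  have "bdd_above ((\<lambda>xy. \<bar>u (fst xy) - u (snd xy)\<bar> / dist (fst xy) (snd xy) powr lam) `
          {(x, y). x \<in> S \<and> y \<in> S \<and> x \<noteq> y})"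
    using C by (intro bdd_aboveI2[where M = C]) (auto simp: divide_le_eq)
  then show ?thesis
    unfolding holder_seminorm_def by (rule cSUP_upper2[where x = "(x, y)"]) (use assms in auto)
qed

lemma holder_seminorm_nonneg:
  assumes "holder_on lam S u" "x \<in> S" "y \<in> S" "x \<noteq> y"
  shows "0 \<le> holder_seminorm lam S u"
  using holder_quotient_le_holder_seminorm[OF assms] by (meson abs_ge_zero divide_nonneg_nonneg order_trans powr_ge_zero)

lemma holder_seminorm_bound:
  assumes "holder_on lam S u" "x \<in> S" "y \<in> S"
  shows "\<bar>u x - u y\<bar> \<le> holder_seminorm lam S u * dist x y powr lam"
proof (cases "x = y")
  case False
  then show ?thesis
    using holder_quotient_le_holder_seminorm[OF assms False] by (simp add: divide_le_eq)
qed simp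

lemma holder_oscillation_le:
  assumes "holder_on lam S u" "0 \<le> lam" "0 \<le> holder_seminorm lam S u"
    and "U \<subseteq> S" "bounded U" "diameter U \<le> r" "x \<in> U" "y \<in> U"
  shows "\<bar>u x - u y\<bar> \<le> holder_seminorm lam S u * r powr lam"
proof -
  have "dist x y powr lam \<le> r powr lam"
    using assms(2,5-) diameter_bounded_bound[of U x y] by (intro powr_mono2) auto
  then show ?thesis
    using holder_seminorm_bound[OF assms(1)] assms(3,4,7,8)
    by (meson mult_left_mono order_trans subsetD)
qed

lemma holder_seminorm_le_holder_norm:
  assumes "bounded (u ` S)" "S \<noteq> {}"
  shows "holder_seminorm lam S u \<le> holder_norm lam S u"
proof -
  have "bdd_above ((\<lambda>x. \<bar>u x\<bar>) ` S)"
    using assms(1) unfolding bounded_iff by (auto intro: bdd_aboveI2)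
  then have "0 \<le> (SUP x \<in> S. \<bar>u x\<bar>)"
    using assms(2) by (auto intro: cSUP_upper2)
  then show ?thesis
    unfolding holder_norm_def by simp
qed

lemma continuous_on_compact_imp_set_integrable:
  fixes u :: "'a::euclidean_space \<Rightarrow> real"
  assumes u: "continuous_on S u" and S: "compact S" and U: "U \<subseteq> S" "U \<in> sets lebesgue"
  shows "set_integrable lebesgue U u"
proof -
  obtain C where C: "\<And>x. x \<in> S \<Longrightarrow> \<bar>u x\<bar> \<le> C"
    using compact_imp_bounded[OF compact_continuous_image[OF u S]] unfolding bounded_iff by auto
  have "U \<in> lmeasurable"
    using U S by (intro bounded_set_imp_lmeasurable) (auto intro: bounded_subset compact_imp_bounded)
  then show ?thesis
    using U C continuous_on_subset[OF u U(1)]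
    by (intro measurable_bounded_by_integrable_imp_absolutely_integrable[where g = "\<lambda>_. C"]
        continuous_imp_measurable_on_sets_lebesgue integrable_on_const) auto
qed

lemma L2_on_imp_set_integrable:
  assumes "\<Omega> \<in> lmeasurable" "L2_on \<Omega> v"
  shows "set_integrable lebesgue \<Omega> v"
proof (rule set_integrable_bound[where f = "\<lambda>x. (v x)\<^sup>2 + 1"])
  show "set_integrable lebesgue \<Omega> (\<lambda>x. (v x)\<^sup>2 + 1)"
    using assms unfolding L2_on_def by (intro set_integral_add(1)) auto
  show "set_borel_measurable lebesgue \<Omega> v"
    using assms(2) unfolding L2_on_def by blast
  show "AE x in lebesgue. x \<in> \<Omega> \<longrightarrow> norm (v x) \<le> norm ((v x)\<^sup>2 + 1)"
    using abs_le_square_plus_one by auto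
qed

lemma set_integral_abs_le_sqrt_measure_L2:
  fixes v :: "'a \<Rightarrow> real"
  assumes S: "S \<in> sets N" "emeasure N S \<noteq> \<infinity>"
    and v: "set_integrable N S v" "set_integrable N S (\<lambda>x. (v x)\<^sup>2)"
  shows "(LINT x:S|N. \<bar>v x\<bar>) \<le> sqrt (measure N S) * sqrt (LINT x:S|N. (v x)\<^sup>2)"
proof -
  have int_abs: "integrable N (\<lambda>x. indicator S x * \<bar>v x\<bar>)"
    using set_integrable_abs[OF v(1)] unfolding set_integrable_def by simp
  have int_sq: "integrable N (\<lambda>x. indicator S x * (v x)\<^sup>2)"
    using v(2) unfolding set_integrable_def by simp
  have int_ind: "integrable N (indicator S :: 'a \<Rightarrow> real)"
    using S by (simp add: less_top)
  have "(\<integral>\<^sup>+x. ennreal (indicator S x * \<bar>v x\<bar>) * ennreal (indicator S x) \<partial>N)\<^sup>2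
      \<le> (\<integral>\<^sup>+x. ennreal (indicator S x * \<bar>v x\<bar>) ^ 2 \<partial>N)
         * (\<integral>\<^sup>+x. ennreal (indicator S x) ^ 2 \<partial>N)"
    by (rule Cauchy_Schwarz_nn_integral) (use S int_abs in auto)
  also have "(\<lambda>x. ennreal (indicator S x * \<bar>v x\<bar>) ^ 2)
      = (\<lambda>x. ennreal (indicator S x * (v x)\<^sup>2))"
    by (rule ext) (simp add: ennreal_power power_mult_distrib indicator_def)
  also have "(\<lambda>x. ennreal (indicator S x) ^ 2) = (\<lambda>x. ennreal (indicator S x))"
    by (auto simp: indicator_def)
  also have "(\<lambda>x. ennreal (indicator S x * \<bar>v x\<bar>) * ennreal (indicator S x))
      = (\<lambda>x. ennreal (indicator S x * \<bar>v x\<bar>))"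
    by (auto simp: indicator_def)
  finally have "ennreal ((LINT x:S|N. \<bar>v x\<bar>)\<^sup>2) \<le> ennreal ((LINT x:S|N. (v x)\<^sup>2) * measure N S)"
    unfolding set_lebesgue_integral_def
    using nn_integral_eq_integral[OF int_abs] nn_integral_eq_integral[OF int_sq]
      nn_integral_eq_integral[OF int_ind] S(1)
    by (simp add: ennreal_power ennreal_mult integral_nonneg sets.Int_space_eq2)
  then have "(LINT x:S|N. \<bar>v x\<bar>)\<^sup>2 \<le> measure N S * (LINT x:S|N. (v x)\<^sup>2)"
    by (subst (asm) ennreal_le_iff) (auto simp: set_lebesgue_integral_def integral_nonneg mult.commute)
  then show ?thesis
    by (metis real_le_rsqrt real_sqrt_mult)
qed

lemma card_le_Max_multiplicity:
  assumes "finite I" "x \<in> \<Omega>" "\<And>i. i \<in> I \<Longrightarrow> B i \<subseteq> K i"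
  shows "card {i \<in> I. x \<in> B i} \<le> Max ((\<lambda>y. card {i \<in> I. y \<in> K i}) ` \<Omega>)"
proof -
  have "(\<lambda>y. card {i \<in> I. y \<in> K i}) ` \<Omega> \<subseteq> {..card I}"
    using assms(1) by (auto intro!: card_mono)
  then have "finite ((\<lambda>y. card {i \<in> I. y \<in> K i}) ` \<Omega>)"
    by (rule finite_subset) simp
  then have "card {i \<in> I. x \<in> K i} \<le> Max ((\<lambda>y. card {i \<in> I. y \<in> K i}) ` \<Omega>)"
    using assms(2) by (rule Max_ge[OF _ imageI])
  moreover have "card {i \<in> I. x \<in> B i} \<le> card {i \<in> I. x \<in> K i}"
    using assms(1,3) by (intro card_mono) auto
  ultimately show ?thesis
    by linarith
qed
lemma sum_set_integral_le_multiplicity: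
  fixes f :: "'a \<Rightarrow> real"
  assumes I: "finite I" and B: "\<And>i. i \<in> I \<Longrightarrow> B i \<in> sets N \<and> B i \<subseteq> S"
    and f: "set_integrable N S f" "\<And>x. x \<in> S \<Longrightarrow> 0 \<le> f x"
    and mult: "\<And>x. x \<in> S \<Longrightarrow> card {i \<in> I. x \<in> B i} \<le> k"
  shows "(\<Sum>i\<in>I. LINT x:B i|N. f x) \<le> k * (LINT x:S|N. f x)"
proof -
  have int_B: "integrable N (\<lambda>x. indicator (B i) x * f x)" if "i \<in> I" for i
    using set_integrable_subset[OF f(1)] B[OF that] unfolding set_integrable_def by simp
  have pointwise: "(\<Sum>i\<in>I. indicator (B i) x * f x) \<le> k * (indicator S x * f x)" for x
  proof (cases "x \<in> S")
    case True
    have "(\<Sum>i\<in>I. indicator (B i) x * f x) = card {i \<in> I. x \<in> B i} * f x"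
      using I by (simp add: sum_distrib_right[symmetric] indicator_def sum.If_cases Int_def conj_commute)
    also have "\<dots> \<le> k * f x"
      using mult[OF True] f(2)[OF True] by (intro mult_right_mono) auto
    finally show ?thesis
      using True by simp
  next
    case False
    then have "x \<notin> B i" if "i \<in> I" for i
      using B[OF that] by blast
    then show ?thesis
      using False by simp
  qed
  have "(\<Sum>i\<in>I. LINT x:B i|N. f x) = (LINT x|N. (\<Sum>i\<in>I. indicator (B i) x * f x))"
    unfolding set_lebesgue_integral_def using int_B by (simp add: integral_sum)
  also have "\<dots> \<le> (LINT x|N. k * (indicator S x * f x))"
    using f(1) int_B pointwise unfolding set_integrable_def by (intro integral_mono) auto
  also have "\<dots> = k * (LINT x:S|N. f x)"
    unfolding set_lebesgue_integral_def by simp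
  finally show ?thesis .
qed

lemma point_value_avg_error:
  fixes U :: "'a::euclidean_space set"
  assumes U: "U \<in> lmeasurable"
    and u: "set_integrable lebesgue U u" and v: "set_integrable lebesgue U v"
    and osc: "\<And>x. x \<in> U \<Longrightarrow> \<bar>c - u x\<bar> \<le> \<delta>" and "0 \<le> \<delta>"
  shows "\<bar>c * measure lebesgue U * avg U v - measure lebesgue U * avg U u * avg U v\<bar>
           \<le> \<delta> * (LINT x:U|lebesgue. \<bar>v x\<bar>)"
proof (cases "measure lebesgue U = 0")
  case True
  \<comment> \<open>then all averages over \<open>U\<close> are \<open>0\<close>, as \<open>1 / 0 = 0\<close>\<close>
  have "0 \<le> (LINT x:U|lebesgue. \<bar>v x\<bar>)"
    unfolding set_lebesgue_integral_def by simp
  then show ?thesis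
    using True \<open>0 \<le> \<delta>\<close> by (simp add: avg_def)
next
  case False
  define \<mu> where "\<mu> = measure lebesgue U"
  have "\<mu> > 0"
    using False measure_nonneg[of lebesgue U] unfolding \<mu>_def by linarith
  have U_finite: "U \<in> sets lebesgue" "emeasure lebesgue U \<noteq> \<infinity>"
    using U by (auto simp: fmeasurable_def)
  have const: "set_integrable lebesgue U (\<lambda>_. c)" "(LINT x:U|lebesgue. c) = \<mu> * c"
    using U set_integral_const[OF U_finite, of c] by (auto simp: \<mu>_def)
  have "\<bar>c * \<mu> - (LINT x:U|lebesgue. u x)\<bar> = \<bar>LINT x:U|lebesgue. c - u x\<bar>"
    using const u by (simp add: set_integral_diff(2) mult.commute)
  also have "\<dots> \<le> (LINT x:U|lebesgue. \<bar>c - u x\<bar>)"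
    using set_integral_norm_bound[of lebesgue U "\<lambda>x. c - u x"] const u by simp
  also have "\<dots> \<le> (LINT x:U|lebesgue. \<delta>)"
    using U const u osc by (intro set_integral_mono) (auto simp: set_integrable_abs)
  also have "\<dots> = \<mu> * \<delta>"
    using set_integral_const[OF U_finite, of \<delta>] by (simp add: \<mu>_def)
  finally have u_err: "\<bar>c * \<mu> - (LINT x:U|lebesgue. u x)\<bar> \<le> \<mu> * \<delta>" .
  have v_abs: "\<bar>LINT x:U|lebesgue. v x\<bar> \<le> (LINT x:U|lebesgue. \<bar>v x\<bar>)"
    using set_integral_norm_bound[OF v] by simp
  have "c * \<mu> * avg U v - \<mu> * avg U u * avg U v
      = (c * \<mu> - (LINT x:U|lebesgue. u x)) * (LINT x:U|lebesgue. v x) / \<mu>"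
    using \<open>\<mu> > 0\<close> unfolding avg_def \<mu>_def[symmetric] by (simp add: field_simps)
  also have "\<bar>\<dots>\<bar> \<le> \<delta> * (LINT x:U|lebesgue. \<bar>v x\<bar>)"
  proof -
    have "\<bar>c * \<mu> - (LINT x:U|lebesgue. u x)\<bar> * \<bar>LINT x:U|lebesgue. v x\<bar>
        \<le> \<mu> * \<delta> * (LINT x:U|lebesgue. \<bar>v x\<bar>)"
      using \<open>\<mu> > 0\<close> \<open>0 \<le> \<delta>\<close> by (intro mult_mono u_err v_abs) auto
    then show ?thesis
      using \<open>\<mu> > 0\<close> by (simp add: abs_mult pos_divide_le_eq mult_ac)
  qed
  finally show ?thesis
    unfolding \<mu>_def .
qed

lemma point_value_data_error_le:
  fixes \<Omega> :: "'a::euclidean_space set"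
  assumes \<Omega>: "\<Omega> \<in> lmeasurable" and I: "finite I"
    and B: "\<And>i. i \<in> I \<Longrightarrow> B i \<in> lmeasurable \<and> B i \<subseteq> \<Omega>"
    and u: "\<And>i. i \<in> I \<Longrightarrow> set_integrable lebesgue (B i) u"
    and osc: "\<And>i x. i \<in> I \<Longrightarrow> x \<in> B i \<Longrightarrow> \<bar>c i - u x\<bar> \<le> \<delta>" and "0 \<le> \<delta>"
    and mult: "\<And>x. x \<in> \<Omega> \<Longrightarrow> card {i \<in> I. x \<in> B i} \<le> k"
    and v: "L2_on \<Omega> v"
  shows "\<bar>(\<Sum>i\<in>I. c i * measure lebesgue (B i) * avg (B i) v)
            - (\<Sum>i\<in>I. measure lebesgue (B i) * avg (B i) u * avg (B i) v)\<bar>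
           \<le> \<delta> * k * sqrt (measure lebesgue \<Omega>) * L2_norm \<Omega> v"
proof -
  have v_int: "set_integrable lebesgue \<Omega> v"
    by (rule L2_on_imp_set_integrable[OF \<Omega> v])
  have v_int_B: "set_integrable lebesgue (B i) v" if "i \<in> I" for i
    using B[OF that] by (intro set_integrable_subset[OF v_int]) auto
  have "\<bar>(\<Sum>i\<in>I. c i * measure lebesgue (B i) * avg (B i) v)
          - (\<Sum>i\<in>I. measure lebesgue (B i) * avg (B i) u * avg (B i) v)\<bar>
      \<le> (\<Sum>i\<in>I. \<bar>c i * measure lebesgue (B i) * avg (B i) v
                    - measure lebesgue (B i) * avg (B i) u * avg (B i) v\<bar>)"
    by (simp add: sum_subtractf[symmetric] sum_abs)
  also have "\<dots> \<le> (\<Sum>i\<in>I. \<delta> * (LINT x:B i|lebesgue. \<bar>v x\<bar>))"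
    using B u v_int_B osc \<open>0 \<le> \<delta>\<close> by (intro sum_mono point_value_avg_error) auto
  also have "\<dots> = \<delta> * (\<Sum>i\<in>I. LINT x:B i|lebesgue. \<bar>v x\<bar>)"
    by (simp add: sum_distrib_left)
  also have "\<dots> \<le> \<delta> * (k * (LINT x:\<Omega>|lebesgue. \<bar>v x\<bar>))"
    using I B mult set_integrable_abs[OF v_int] \<open>0 \<le> \<delta>\<close>
    by (intro mult_left_mono sum_set_integral_le_multiplicity) auto
  also have "\<dots> \<le> \<delta> * (k * (sqrt (measure lebesgue \<Omega>) * L2_norm \<Omega> v))"
    using \<Omega> v_int v \<open>0 \<le> \<delta>\<close> unfolding L2_norm_def L2_on_def
    by (intro mult_left_mono set_integral_abs_le_sqrt_measure_L2) (auto simp: fmeasurable_def)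
  finally show ?thesis
    by (simp add: mult.assoc)
qed

theorem proposition3p11:
  fixes \<Omega> :: "'a::euclidean_space set"
    and B K :: "nat \<Rightarrow> 'a set"
    and m :: nat
    and u :: "'a \<Rightarrow> real"
    and lam :: real
    and p :: "nat \<Rightarrow> 'a"
  assumes dom: "open \<Omega>" "connected \<Omega>" "\<Omega> \<noteq> {}" "bounded \<Omega>"
    and B: "\<And>i. i \<in> {1..m} \<Longrightarrow> open (B i) \<and> B i \<noteq> {} \<and> B i \<subseteq> \<Omega>"
    and K: "\<And>i. i \<in> {1..m} \<Longrightarrow> convex (K i) \<and> lipschitz_boundary (K i) \<and> B i \<subseteq> K i"
    and cover: "\<Omega> \<subseteq> (\<Union>i\<in>{1..m}. closure (K i))"
    and lam: "0 < lam" "lam \<le> 1"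
    and u: "holder_on lam (closure \<Omega>) u"
    and p: "\<And>i. i \<in> {1..m} \<Longrightarrow> p i \<in> B i"
  shows "let M = Max ((\<lambda>x. card {i \<in> {1..m}. x \<in> K i}) ` \<Omega>);
             r = Max ((\<lambda>i. diameter (B i)) ` {1..m});
             b = (\<lambda>i. u (p i));
             bf = (\<lambda>v. \<Sum>i\<in>{1..m}. measure lebesgue (B i) * avg (B i) u * avg (B i) v);
             bt = (\<lambda>v. \<Sum>i\<in>{1..m}. b i * measure lebesgue (B i) * avg (B i) v)
         in \<forall>v. L2_on \<Omega> v \<and> L2_norm \<Omega> v \<noteq> 0 \<longrightarrow>
              \<bar>bt v - bf v\<bar> / L2_norm \<Omega> v
                \<le> holder_norm lam (closure \<Omega>) u * real M * sqrt (measure lebesgue \<Omega>) * r powr lam"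
proof -
  define M where "M = Max ((\<lambda>x. card {i \<in> {1..m}. x \<in> K i}) ` \<Omega>)"
  define r where "r = Max ((\<lambda>i. diameter (B i)) ` {1..m})"
  define H where "H = holder_seminorm lam (closure \<Omega>) u"
  have B_bounded: "bounded (B i)" and B_lmeasurable: "B i \<in> lmeasurable"
    and B_sub: "B i \<subseteq> \<Omega>" and B_closure: "B i \<subseteq> closure \<Omega>" if "i \<in> {1..m}" for i
    using B[OF that] dom(4) closure_subset by (auto intro: bounded_subset lmeasurable_open)
  have u_cont: "continuous_on (closure \<Omega>) u"
    by (rule holder_on_imp_continuous_on[OF u lam(1)])
  have u_int: "set_integrable lebesgue (B i) u" if "i \<in> {1..m}" for i
    using B_closure[OF that] B_lmeasurable[OF that] dom(4)
    by (intro continuous_on_compact_imp_set_integrable[OF u_cont]) (auto simp: compact_closure)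
  obtain x where "x \<in> \<Omega>"
    using dom(3) by blast
  moreover have "\<Omega> \<noteq> {x}"
    using dom(1) not_open_singleton by metis
  ultimately obtain y where "x \<in> \<Omega>" "y \<in> \<Omega>" "x \<noteq> y"
    by blast
  then have "0 \<le> H"
    unfolding H_def using closure_subset by (intro holder_seminorm_nonneg[OF u]) auto
  have osc: "\<bar>u (p i) - u x\<bar> \<le> H * r powr lam" if "i \<in> {1..m}" "x \<in> B i" for i x
    unfolding H_def
  proof (rule holder_oscillation_le[OF u])
    show "diameter (B i) \<le> r"
      unfolding r_def using that(1) by (intro Max_ge) auto
  qed (use that p B_bounded B_closure lam \<open>0 \<le> H\<close> H_def in auto)
  have "H \<le> holder_norm lam (closure \<Omega>) u"
    unfolding H_def using u_cont dom(3,4)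
    by (intro holder_seminorm_le_holder_norm compact_imp_bounded compact_continuous_image)
      (auto simp: compact_closure)
  have mult: "card {i \<in> {1..m}. x \<in> B i} \<le> M" if "x \<in> \<Omega>" for x
    unfolding M_def using K that by (intro card_le_Max_multiplicity) auto
  show ?thesis
    unfolding Let_def M_def[symmetric] r_def[symmetric]
  proof (intro allI impI, elim conjE)
    fix v assume v: "L2_on \<Omega> v" "L2_norm \<Omega> v \<noteq> 0"
    have "0 < L2_norm \<Omega> v"
      using v(2) unfolding L2_norm_def set_lebesgue_integral_def by (simp add: order_less_le)
    have "\<bar>(\<Sum>i\<in>{1..m}. u (p i) * measure lebesgue (B i) * avg (B i) v)
            - (\<Sum>i\<in>{1..m}. measure lebesgue (B i) * avg (B i) u * avg (B i) v)\<bar>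
        \<le> H * r powr lam * M * sqrt (measure lebesgue \<Omega>) * L2_norm \<Omega> v" (is "?err \<le> _")
      using dom B_lmeasurable B_sub u_int osc \<open>0 \<le> H\<close> mult v(1)
      by (intro point_value_data_error_le) (auto intro: lmeasurable_open)
    also have "\<dots> \<le> holder_norm lam (closure \<Omega>) u * M * sqrt (measure lebesgue \<Omega>) * r powr lam
                    * L2_norm \<Omega> v"
      using mult_right_mono[OF \<open>H \<le> holder_norm lam (closure \<Omega>) u\<close>,
          of "r powr lam * M * sqrt (measure lebesgue \<Omega>) * L2_norm \<Omega> v"] \<open>0 < L2_norm \<Omega> v\<close>
      by (simp add: mult_ac)
    finally show "?err / L2_norm \<Omega> v
        \<le> holder_norm lam (closure \<Omega>) u * M * sqrt (measure lebesgue \<Omega>) * r powr lam"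
      using \<open>0 < L2_norm \<Omega> v\<close> by (simp add: pos_divide_le_eq)
  qed
qed

end
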